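(* Let $\theta\in(0,\pi)$ and let $f_\theta=h_\theta+\overline{g_\theta}\in S_H$ with $h_\theta(z)+g_\theta(z)=\dfrac{1}{2i\sin\theta}\log\!\left(\dfrac{1+ze^{i\theta}}{1+ze^{-i\theta}}\right)$ (principal branch, vanishing at $0$). Let $\alpha\in[-1,1]$ and let $f_\alpha=h_\alpha+\overline{g_\alpha}\in S_H$ with $h_\alpha(z)+g_\alpha(z)=\dfrac{z(1-\alpha z)}{1-z^2}$. Let $0\le t\le1$ and $f_{\theta,\alpha}=tf_\theta+(1-t)f_\alpha$. If $f_{\theta,\alpha}$ is locally univalent and sense-preserving in $E$, then $f_{\theta,\alpha}\in S_H$ and $f_{\theta,\alpha}$ maps $E$ onto a domain convex in the direction of the imaginary axis.
   Context: $E=\{z\in\mathbb{C}:|z|<1\}$. A harmonic mapping $f=h+\overline{g}$ on $E$ (with $h,g$ analytic) is locally univalent and sense-preserving iff $h'\neq0$ in $E$ and its dilatation $\omega=g'/h'$ satisfies $|\omega|<1$ in $E$. $S_H$ denotes the class of harmonic, univalent, sense-preserving mappings $f=h+\overline{g}$ of $E$ normalized by $f(0)=0$, $f_z(0)=1$. A domain $\Omega$ is convex in the direction of the imaginary axis if every line parallel to the imaginary axis has connected or empty intersection with $\Omega$. *)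

theory Defs
  imports "HOL-Analysis.Analysis"
begin

definition unit_disk :: "complex set" ("\<E>") where
  "unit_disk = ball 0 1"

definition harm :: "(complex \<Rightarrow> complex) \<Rightarrow> (complex \<Rightarrow> complex) \<Rightarrow> complex \<Rightarrow> complex" where
  "harm h g = (\<lambda>z. h z + cnj (g z))"

definition loc_univ_sense_pres :: "(complex \<Rightarrow> complex) \<Rightarrow> (complex \<Rightarrow> complex) \<Rightarrow> bool" where
  "loc_univ_sense_pres h g \<longleftrightarrow>
     (\<forall>z\<in>\<E>. deriv h z \<noteq> 0 \<and> cmod (deriv g z / deriv h z) < 1)"

definition S_H :: "(complex \<Rightarrow> complex) \<Rightarrow> (complex \<Rightarrow> complex) \<Rightarrow> bool" where
  "S_H h g \<longleftrightarrow> h holomorphic_on \<E> \<and> g holomorphic_on \<E> \<and>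
     inj_on (harm h g) \<E> \<and> loc_univ_sense_pres h g \<and>
     harm h g 0 = 0 \<and> deriv h 0 = 1"

definition convex_imag_dir :: "complex set \<Rightarrow> bool" where
  "convex_imag_dir \<Omega> \<longleftrightarrow> (\<forall>x::real. connected (\<Omega> \<inter> {w. Re w = x}))"

end

theory Submission
  imports Defs "HOL-Complex_Analysis.Complex_Analysis" "HOL-Real_Asymp.Real_Asymp"
begin

(* Write F = h + g.  The shear construction of Clunie and Sheil-Small says that a locally
   univalent, sense-preserving f = h + conj g is univalent with image convex in the direction
   of the imaginary axis as soon as F is univalent with such an image.  Along a vertical segment
   of F(E) one has Im f = Im (2 h - F), and 2 h o F^-1 - id has a derivative of positive real part
   because |g'| < |h'|; the Noshiro-Warschawski argument (positive real part of the derivative on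
   a convex set forces injectivity and directional monotonicity) then makes Im f strictly
   increasing there.

   For F = t F_theta + (1 - t) F_alpha we pass to the strip S = {|Im zeta| < pi/4}, which tanh
   maps onto E.  (1 - z^2) F'(z) is a convex combination of Caratheodory functions
   (1 - w)/(1 + w) with |w| < 1, so G = F o tanh has Re G' > 0 on the convex strip: G, hence F,
   is injective and Re G increases strictly along horizontal lines.  On each horizontal line
   Re G is computed explicitly; its limits at +-infinity (in the extended reals) do not depend on
   the line, so every level set {Re G = c} meets every horizontal line, and invariance of domain
   shows that it is a continuous image of an interval.  Hence F(E) is convex in the imaginary
   direction and the shear construction applies. *)

lemma noshiro_warschawski:
  fixes G G' :: "complex \<Rightarrow> complex"
  assumes S: "convex S" and ab: "a \<in> S" "b \<in> S" "a \<noteq> b"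
    and G': "\<And>\<zeta>. \<zeta> \<in> S \<Longrightarrow> (G has_field_derivative G' \<zeta>) (at \<zeta>)"
    and pos: "\<And>\<zeta>. \<zeta> \<in> S \<Longrightarrow> Re (G' \<zeta>) > 0"
  shows "Re ((G b - G a) / (b - a)) > 0"
proof -
  define p where "p = (\<lambda>\<tau>::real. a + of_real \<tau> * (b - a))"
  define \<psi> where "\<psi> = (\<lambda>\<tau>. Re (G (p \<tau>) / (b - a)))"
  have p_in: "p \<tau> \<in> S" if "0 \<le> \<tau>" "\<tau> \<le> 1" for \<tau>
  proof -
    have "p \<tau> = (1 - \<tau>) *\<^sub>R a + \<tau> *\<^sub>R b"
      by (simp add: p_def scaleR_conv_of_real algebra_simps)
    thus ?thesis using convexD_alt[OF S ab(1,2) that] by simp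
  qed
  have \<psi>_deriv: "DERIV \<psi> \<tau> :> Re (G' (p \<tau>))" if "0 \<le> \<tau>" "\<tau> \<le> 1" for \<tau>
  proof -
    have "(p has_vector_derivative (b - a)) (at \<tau>)"
      unfolding p_def by (auto intro!: derivative_eq_intros)
    moreover have "((\<lambda>\<zeta>. G \<zeta> / (b - a)) has_field_derivative G' (p \<tau>) / (b - a)) (at (p \<tau>))"
      using G'[OF p_in[OF that]] by (rule DERIV_cdivide)
    ultimately have "(((\<lambda>\<zeta>. G \<zeta> / (b - a)) \<circ> p) has_vector_derivative
        (b - a) * (G' (p \<tau>) / (b - a))) (at \<tau>)"
      by (rule field_vector_diff_chain_at)
    hence "((\<lambda>\<tau>. G (p \<tau>) / (b - a)) has_vector_derivative G' (p \<tau>)) (at \<tau>)"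
      using ab(3) by (simp add: o_def)
    thus ?thesis unfolding \<psi>_def by (rule has_field_derivative_Re)
  qed
  have "\<psi> 0 < \<psi> 1"
  proof (rule DERIV_pos_imp_increasing[of 0 1])
    fix \<tau> :: real assume "0 \<le> \<tau>" "\<tau> \<le> 1"
    thus "\<exists>y. DERIV \<psi> \<tau> :> y \<and> y > 0" using \<psi>_deriv pos p_in by blast
  qed simp
  moreover have "p 0 = a" "p 1 = b" by (simp_all add: p_def)
  ultimately show ?thesis by (simp add: \<psi>_def diff_divide_distrib)
qed

lemma noshiro_warschawski_inj:
  fixes G G' :: "complex \<Rightarrow> complex"
  assumes "convex S"
    and "\<And>\<zeta>. \<zeta> \<in> S \<Longrightarrow> (G has_field_derivative G' \<zeta>) (at \<zeta>)"
    and "\<And>\<zeta>. \<zeta> \<in> S \<Longrightarrow> Re (G' \<zeta>) > 0"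
  shows "inj_on G S"
proof (rule inj_onI, rule ccontr)
  fix a b assume "a \<in> S" "b \<in> S" "G a = G b" "a \<noteq> b"
  thus False using noshiro_warschawski[OF assms(1) _ _ _ assms(2,3), of a b] by simp
qed

lemma noshiro_warschawski_horizontal:
  fixes G G' :: "complex \<Rightarrow> complex"
  assumes "convex S" "a \<in> S" "b \<in> S" "Im a = Im b" "Re a < Re b"
    and "\<And>\<zeta>. \<zeta> \<in> S \<Longrightarrow> (G has_field_derivative G' \<zeta>) (at \<zeta>)"
    and "\<And>\<zeta>. \<zeta> \<in> S \<Longrightarrow> Re (G' \<zeta>) > 0"
  shows "Re (G a) < Re (G b)"
proof -
  define d where "d = Re b - Re a"
  have d: "b - a = of_real d" "d > 0" using assms(4,5) by (simp_all add: d_def complex_eq_iff)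
  have "Re ((G b - G a) / (b - a)) > 0"
    using d by (intro noshiro_warschawski[OF assms(1-3) _ assms(6,7)]) auto
  hence "Re (G b - G a) / d > 0" unfolding d(1) by (simp only: Re_divide_of_real)
  thus ?thesis using d(2) by (simp add: zero_less_divide_iff)
qed

lemma noshiro_warschawski_vertical:
  fixes G G' :: "complex \<Rightarrow> complex"
  assumes "convex S" "a \<in> S" "b \<in> S" "Re a = Re b" "Im a < Im b"
    and "\<And>\<zeta>. \<zeta> \<in> S \<Longrightarrow> (G has_field_derivative G' \<zeta>) (at \<zeta>)"
    and "\<And>\<zeta>. \<zeta> \<in> S \<Longrightarrow> Re (G' \<zeta>) > 0"
  shows "Im (G a) < Im (G b)"
proof -
  define d where "d = Im b - Im a"
  have d: "b - a = \<i> * of_real d" "d > 0" using assms(4,5) by (simp_all add: d_def complex_eq_iff)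
  have "Re ((G b - G a) / (b - a)) > 0"
    using d by (intro noshiro_warschawski[OF assms(1-3) _ assms(6,7)]) auto
  moreover have "Re (X / (\<i> * of_real d)) = Im X / d" for X :: complex
    by (simp add: Re_divide power2_eq_square)
  ultimately have "Im (G b - G a) / d > 0" unfolding d(1) by simp
  thus ?thesis using d(2) by (simp add: zero_less_divide_iff)
qed

lemma strict_mono_range_ereal:
  fixes \<phi> :: "real \<Rightarrow> real" and Lm Lp :: ereal
  assumes cont: "continuous_on UNIV \<phi>" and mono: "strict_mono \<phi>"
    and top: "((\<lambda>x. ereal (\<phi> x)) \<longlongrightarrow> Lp) at_top"
    and bot: "((\<lambda>x. ereal (\<phi> x)) \<longlongrightarrow> Lm) at_bot"
  shows "range \<phi> = {y. Lm < ereal y \<and> ereal y < Lp}"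
proof (intro equalityI subsetI)
  fix y assume "y \<in> range \<phi>"
  then obtain x where x: "y = \<phi> x" by blast
  have "ereal (\<phi> (x + 1)) \<le> Lp"
    by (rule tendsto_lowerbound[OF top])
       (auto simp: eventually_at_top_linorder strict_mono_less_eq[OF mono] intro!: exI[of _ "x + 1"])
  moreover have "Lm \<le> ereal (\<phi> (x - 1))"
    by (rule tendsto_upperbound[OF bot])
       (auto simp: eventually_at_bot_linorder strict_mono_less_eq[OF mono] intro!: exI[of _ "x - 1"])
  moreover have "\<phi> (x - 1) < \<phi> x" "\<phi> x < \<phi> (x + 1)" using mono by (simp_all add: strict_mono_less)
  ultimately have "Lm < ereal (\<phi> x)" "ereal (\<phi> x) < Lp"
    using order_le_less_trans[of Lm "ereal (\<phi> (x - 1))" "ereal (\<phi> x)"]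
      order_less_le_trans[of "ereal (\<phi> x)" "ereal (\<phi> (x + 1))" Lp] by simp_all
  thus "y \<in> {y. Lm < ereal y \<and> ereal y < Lp}" using x by simp
next
  fix y assume "y \<in> {y. Lm < ereal y \<and> ereal y < Lp}"
  hence y: "Lm < ereal y" "ereal y < Lp" by auto
  obtain b where b: "ereal y < ereal (\<phi> b)"
    using order_tendstoD(1)[OF top y(2)] unfolding eventually_at_top_linorder by blast
  obtain N where N: "\<forall>x\<le>N. ereal (\<phi> x) < ereal y"
    using order_tendstoD(2)[OF bot y(1)] unfolding eventually_at_bot_linorder by blast
  define a where "a = min N b"
  have "\<phi> a < y" "y < \<phi> b" "a \<le> b" using N b by (simp_all add: a_def)
  moreover have "continuous_on {a..b} \<phi>" using cont by (rule continuous_on_subset) simp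
  ultimately obtain x where "\<phi> x = y" using IVT'[of \<phi> a y b] by force
  thus "y \<in> range \<phi>" by (rule range_eqI[OF sym])
qed

lemma tendsto_ereal_with_exploding_term:
  fixes C e :: "'a \<Rightarrow> real"
  assumes C: "(C \<longlongrightarrow> L) F" and e: "filterlim e at_top F" and P: "P \<ge> 0"
  shows "((\<lambda>x. ereal (C x + P * e x)) \<longlongrightarrow> (if P = 0 then ereal L else \<infinity>)) F"
proof (cases "P = 0")
  case True
  thus ?thesis using C by (simp add: tendsto_ereal)
next
  case False
  hence "filterlim (\<lambda>x. P * e x) at_top F"
    using P by (intro filterlim_tendsto_pos_mult_at_top[OF tendsto_const _ e]) simp
  hence "filterlim (\<lambda>x. C x + P * e x) at_top F"
    by (rule filterlim_tendsto_add_at_top[OF C])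
  thus ?thesis using False by (simp add: tendsto_PInfty_eq_at_top)
qed

text \<open>If \<open>Re G\<close> increases strictly along every horizontal line of a strip, then
  \<open>\<zeta> \<mapsto> (Re (G \<zeta>), Im \<zeta>)\<close> is injective, hence (invariance of domain) a homeomorphism of the
  strip onto an open set.\<close>

lemma strip_rectification:
  fixes G :: "complex \<Rightarrow> complex" and a :: real
  assumes cont: "continuous_on {\<zeta>. \<bar>Im \<zeta>\<bar> < a} G"
    and mono: "\<And>s x y. \<bar>s\<bar> < a \<Longrightarrow> x < y \<Longrightarrow> Re (G (Complex x s)) < Re (G (Complex y s))"
  shows "\<exists>\<Psi>. homeomorphism {\<zeta>. \<bar>Im \<zeta>\<bar> < a} ((\<lambda>\<zeta>. Complex (Re (G \<zeta>)) (Im \<zeta>)) ` {\<zeta>. \<bar>Im \<zeta>\<bar> < a})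
                       (\<lambda>\<zeta>. Complex (Re (G \<zeta>)) (Im \<zeta>)) \<Psi>"
proof -
  define S where "S = {\<zeta>. \<bar>Im \<zeta>\<bar> < a}"
  define \<Phi> where "\<Phi> = (\<lambda>\<zeta>. Complex (Re (G \<zeta>)) (Im \<zeta>))"
  have oS: "open S" unfolding S_def by (intro open_Collect_less continuous_intros)
  have cont_\<Phi>: "continuous_on S \<Phi>"
    unfolding \<Phi>_def Complex_eq using cont by (auto simp: S_def intro!: continuous_intros)
  have inj_\<Phi>: "inj_on \<Phi> S"
  proof (rule inj_onI)
    fix \<zeta>1 \<zeta>2 assume \<zeta>: "\<zeta>1 \<in> S" "\<zeta>2 \<in> S" "\<Phi> \<zeta>1 = \<Phi> \<zeta>2"
    hence s: "Im \<zeta>1 = Im \<zeta>2" "Re (G \<zeta>1) = Re (G \<zeta>2)" "\<bar>Im \<zeta>1\<bar> < a"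
      by (auto simp: \<Phi>_def S_def)
    have e: "Complex (Re \<zeta>1) (Im \<zeta>1) = \<zeta>1" "Complex (Re \<zeta>2) (Im \<zeta>1) = \<zeta>2"
      using s(1) by (simp_all add: complex_eq_iff)
    have "\<not> Re \<zeta>1 < Re \<zeta>2" "\<not> Re \<zeta>2 < Re \<zeta>1"
      using mono[of "Im \<zeta>1" "Re \<zeta>1" "Re \<zeta>2"] mono[of "Im \<zeta>1" "Re \<zeta>2" "Re \<zeta>1"] s e by auto
    thus "\<zeta>1 = \<zeta>2" using s(1) by (simp add: complex_eq_iff)
  qed
  show ?thesis
    using invariance_of_domain_homeomorphism[OF oS cont_\<Phi> _ inj_\<Phi>] unfolding S_def \<Phi>_def by auto
qed

text \<open>If moreover \<open>Re G\<close> takes the same values on all horizontal lines,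
  the image of the rectification contains the whole vertical segment at height \<open>c\<close>; pulling this
  segment back shows that \<open>G(strip) \<inter> {Re w = c}\<close> is connected.\<close>

lemma strip_level_set_connected:
  fixes G :: "complex \<Rightarrow> complex" and a c :: real
  assumes cont: "continuous_on {\<zeta>. \<bar>Im \<zeta>\<bar> < a} G"
    and mono: "\<And>s x y. \<bar>s\<bar> < a \<Longrightarrow> x < y \<Longrightarrow> Re (G (Complex x s)) < Re (G (Complex y s))"
    and range: "\<And>s s' x. \<bar>s\<bar> < a \<Longrightarrow> \<bar>s'\<bar> < a \<Longrightarrow>
                  \<exists>x'. Re (G (Complex x' s')) = Re (G (Complex x s))"
  shows "connected (G ` {\<zeta>. \<bar>Im \<zeta>\<bar> < a} \<inter> {w. Re w = c})"
proof (cases "\<exists>\<zeta>0. \<bar>Im \<zeta>0\<bar> < a \<and> Re (G \<zeta>0) = c")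
  case False
  hence "G ` {\<zeta>. \<bar>Im \<zeta>\<bar> < a} \<inter> {w. Re w = c} = {}" by auto
  thus ?thesis by simp
next
  case True
  then obtain \<zeta>0 where \<zeta>0: "\<bar>Im \<zeta>0\<bar> < a" "Re (G \<zeta>0) = c" by blast
  define S where "S = {\<zeta>. \<bar>Im \<zeta>\<bar> < a}"
  define \<Phi> where "\<Phi> = (\<lambda>\<zeta>. Complex (Re (G \<zeta>)) (Im \<zeta>))"
  obtain \<Psi> where hom: "homeomorphism S (\<Phi> ` S) \<Phi> \<Psi>"
    using strip_rectification[OF cont mono] unfolding S_def \<Phi>_def by blast
  define V where "V = (\<lambda>s. Complex c s) ` {-a<..<a}"
  have V_sub: "V \<subseteq> \<Phi> ` S"
  proof
    fix v assume "v \<in> V"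
    then obtain s where s: "\<bar>s\<bar> < a" "v = Complex c s" by (force simp: V_def abs_less_iff)
    obtain x' where "Re (G (Complex x' s)) = Re (G (Complex (Re \<zeta>0) (Im \<zeta>0)))"
      using range[OF \<zeta>0(1) s(1)] by blast
    hence "v = \<Phi> (Complex x' s)" using s \<zeta>0 by (simp add: \<Phi>_def)
    thus "v \<in> \<Phi> ` S" using s by (auto simp: S_def)
  qed
  have level: "G ` S \<inter> {w. Re w = c} = (G \<circ> \<Psi>) ` V"
  proof (intro equalityI subsetI)
    fix w assume "w \<in> G ` S \<inter> {w. Re w = c}"
    then obtain \<zeta> where "\<zeta> \<in> S" "w = G \<zeta>" "Re w = c" by auto
    moreover from this have "\<Phi> \<zeta> \<in> V" by (auto simp: \<Phi>_def V_def S_def abs_less_iff intro!: imageI)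
    ultimately show "w \<in> (G \<circ> \<Psi>) ` V"
      using homeomorphism_apply1[OF hom] by (metis comp_apply image_eqI)
  next
    fix w assume "w \<in> (G \<circ> \<Psi>) ` V"
    then obtain v where v: "v \<in> V" "w = G (\<Psi> v)" by auto
    hence "\<Psi> v \<in> S" "\<Phi> (\<Psi> v) = v"
      using V_sub homeomorphism_image2[OF hom] homeomorphism_apply2[OF hom] by auto
    thus "w \<in> G ` S \<inter> {w. Re w = c}" using v by (auto simp: \<Phi>_def V_def)
  qed
  have conn_V: "connected V" unfolding V_def
    by (intro connected_continuous_image continuous_intros) auto
  have cont_V: "continuous_on V (G \<circ> \<Psi>)"
  proof (rule continuous_on_compose)
    show "continuous_on V \<Psi>"
      using homeomorphism_cont2[OF hom] V_sub by (rule continuous_on_subset)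
    have "\<Psi> ` V \<subseteq> S" using V_sub homeomorphism_image2[OF hom] by auto
    thus "continuous_on (\<Psi> ` V) G" using cont unfolding S_def by (rule continuous_on_subset[rotated])
  qed
  show ?thesis
    unfolding level[unfolded S_def] by (rule connected_continuous_image[OF cont_V conn_V])
qed

lemma connected_vertical_contains_segment:
  assumes A: "connected A" "A \<subseteq> {w. Re w = c}" and w: "w1 \<in> A" "w2 \<in> A"
  shows "closed_segment w1 w2 \<subseteq> A"
proof
  fix p assume p: "p \<in> closed_segment w1 w2"
  have "convex {w. Re w = c}"
    using convex_hyperplane[of "1::complex" c] by (simp add: inner_complex_def)
  hence "closed_segment w1 w2 \<subseteq> {w. Re w = c}"
    using A(2) w by (intro closed_segment_subset) auto
  hence Re_p: "Re p = c" using p by blast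
  have "Im p \<in> Im ` closed_segment w1 w2" using p by blast
  hence "Im p \<in> closed_segment (Im w1) (Im w2)"
    using closed_segment_linear_image[OF bounded_linear_Im[THEN bounded_linear.linear], of w1 w2]
    by simp
  hence "\<exists>z\<in>A. inner \<i> z = Im p"
    unfolding closed_segment_eq_real_ivl
    using connected_ivt_hyperplane[OF A(1) w(1) w(2), of \<i> "Im p"]
      connected_ivt_hyperplane[OF A(1) w(2) w(1), of \<i> "Im p"]
    by (simp add: inner_complex_def split: if_splits)
  then obtain z where "z \<in> A" "Im z = Im p" by (auto simp: inner_complex_def)
  moreover have "Re z = Re p" using \<open>z \<in> A\<close> A(2) Re_p by auto
  ultimately show "p \<in> A" by (metis complex_eqI)
qed

lemma Re_gt_half:
  fixes A :: complex assumes "cmod (1 - A) < cmod A" shows "Re A > 1 / 2"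
proof -
  have "(cmod (1 - A))\<^sup>2 < (cmod A)\<^sup>2"
    using assms by (simp add: power_strict_mono)
  hence "(1 - Re A)\<^sup>2 + (Im A)\<^sup>2 < (Re A)\<^sup>2 + (Im A)\<^sup>2" by (simp add: cmod_power2)
  thus ?thesis by (simp add: power2_eq_square algebra_simps)
qed

text \<open>For \<open>F = h + g\<close> with inverse \<open>K\<close>, the inequality \<open>|g'| < |h'|\<close> makes the derivative
  \<open>2 h' K' - 1\<close> of \<open>2 h \<circ> K - id\<close> have positive real part (here \<open>(h' + g') K' = 1\<close>).\<close>

lemma shear_derivative_Re_pos:
  fixes h' g' k :: complex
  assumes inv: "(h' + g') * k = 1" and dil: "cmod g' < cmod h'"
  shows "Re (2 * (h' * k) - 1) > 0"
proof -
  have "k \<noteq> 0" using inv by auto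
  hence "cmod (g' * k) < cmod (h' * k)" using dil by (simp add: norm_mult)
  moreover have "g' * k = 1 - h' * k" using inv by (simp add: algebra_simps)
  ultimately have "cmod (1 - h' * k) < cmod (h' * k)" by simp
  hence "Re (h' * k) > 1 / 2" by (rule Re_gt_half)
  thus ?thesis by simp
qed

text \<open>Along a vertical segment of \<open>F(E)\<close> the imaginary part \<open>Im f = Im (2 h - F)\<close> of the sheared
  map increases strictly.\<close>

lemma shear_vertical_increasing:
  fixes h g :: "complex \<Rightarrow> complex"
  assumes hol: "h holomorphic_on \<E>" "g holomorphic_on \<E>"
    and lu: "loc_univ_sense_pres h g"
    and inj: "inj_on (\<lambda>z. h z + g z) \<E>"
    and cid: "convex_imag_dir ((\<lambda>z. h z + g z) ` \<E>)"
    and z: "z1 \<in> \<E>" "z2 \<in> \<E>" "Re (h z1 + g z1) = Re (h z2 + g z2)" "Im (h z1 + g z1) < Im (h z2 + g z2)"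
  shows "Im (harm h g z1) < Im (harm h g z2)"
proof -
  define F where "F = (\<lambda>z. h z + g z)"
  have oE: "open \<E>" by (simp add: unit_disk_def)
  have holF: "F holomorphic_on \<E>" unfolding F_def using hol by (intro holomorphic_intros)
  obtain K where holK: "K holomorphic_on F ` \<E>"
    and dK: "\<And>z. z \<in> \<E> \<Longrightarrow> deriv F z * deriv K (F z) = 1" and KF: "\<And>z. z \<in> \<E> \<Longrightarrow> K (F z) = z"
    using holomorphic_has_inverse[OF holF oE] inj unfolding F_def by metis
  have oFE: "open (F ` \<E>)" using open_mapping_thm3[OF holF oE] inj by (simp add: F_def)
  define \<Phi> where "\<Phi> = (\<lambda>w. 2 * h (K w) - w)"
  have \<Phi>_deriv: "(\<Phi> has_field_derivative 2 * (deriv h (K w) * deriv K w) - 1) (at w)" if w: "w \<in> F ` \<E>" for w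
  proof -
    obtain z where z: "z \<in> \<E>" "w = F z" using w by blast
    have "(K has_field_derivative deriv K w) (at w)" by (rule holomorphic_derivI[OF holK oFE w])
    moreover have "(h has_field_derivative deriv h (K w)) (at (K w))"
      using holomorphic_derivI[OF hol(1) oE z(1)] KF z by simp
    ultimately have "((\<lambda>w. h (K w)) has_field_derivative deriv h (K w) * deriv K w) (at w)"
      by (rule DERIV_chain2[rotated])
    thus ?thesis unfolding \<Phi>_def by (intro derivative_eq_intros) auto
  qed
  have \<Phi>_pos: "Re (2 * (deriv h (K w) * deriv K w) - 1) > 0" if w: "w \<in> F ` \<E>" for w
  proof -
    obtain z where z: "z \<in> \<E>" "w = F z" using w by blast
    have "deriv F z = deriv h z + deriv g z"
      unfolding F_def using hol oE z(1)
      by (intro deriv_add holomorphic_on_imp_differentiable_at) auto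
    hence "(deriv h z + deriv g z) * deriv K w = 1" using dK[OF z(1)] z(2) by simp
    moreover have "cmod (deriv g z) < cmod (deriv h z)"
      using lu z(1) unfolding loc_univ_sense_pres_def by (auto simp: norm_divide divide_less_eq)
    ultimately have "Re (2 * (deriv h z * deriv K w) - 1) > 0" by (rule shear_derivative_Re_pos)
    moreover have "K w = z" using KF z by simp
    ultimately show ?thesis by simp
  qed
  have seg: "closed_segment (F z1) (F z2) \<subseteq> F ` \<E>"
    using connected_vertical_contains_segment[of "F ` \<E> \<inter> {w. Re w = Re (F z1)}" "Re (F z1)" "F z1" "F z2"]
      cid z unfolding convex_imag_dir_def F_def by auto
  have "Im (\<Phi> (F z1)) < Im (\<Phi> (F z2))"
  proof (rule noshiro_warschawski_vertical[where G = \<Phi> and a = "F z1" and b = "F z2",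
                OF convex_closed_segment ends_in_segment])
    show "Re (F z1) = Re (F z2)" "Im (F z1) < Im (F z2)" using z(3,4) by (simp_all add: F_def)
    fix \<zeta> assume "\<zeta> \<in> closed_segment (F z1) (F z2)"
    hence \<zeta>: "\<zeta> \<in> F ` \<E>" using seg by blast
    show "(\<Phi> has_field_derivative 2 * (deriv h (K \<zeta>) * deriv K \<zeta>) - 1) (at \<zeta>)"
      by (rule \<Phi>_deriv[OF \<zeta>])
    show "Re (2 * (deriv h (K \<zeta>) * deriv K \<zeta>) - 1) > 0" by (rule \<Phi>_pos[OF \<zeta>])
  qed
  thus ?thesis using KF z(1,2) by (simp add: \<Phi>_def F_def harm_def)
qed

text \<open>Univalence of the sheared map: points with the same real part of \<open>F\<close> but different
  imaginary parts are separated by \<open>Im f\<close>.\<close>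

lemma shear_injective:
  fixes h g :: "complex \<Rightarrow> complex"
  assumes hol: "h holomorphic_on \<E>" "g holomorphic_on \<E>"
    and lu: "loc_univ_sense_pres h g"
    and inj: "inj_on (\<lambda>z. h z + g z) \<E>"
    and cid: "convex_imag_dir ((\<lambda>z. h z + g z) ` \<E>)"
  shows "inj_on (harm h g) \<E>"
proof (rule inj_onI)
  fix z1 z2 assume z: "z1 \<in> \<E>" "z2 \<in> \<E>" "harm h g z1 = harm h g z2"
  hence Re_eq: "Re (h z1 + g z1) = Re (h z2 + g z2)" by (simp add: harm_def complex_eq_iff)
  show "z1 = z2"
  proof (cases "Im (h z1 + g z1) = Im (h z2 + g z2)")
    case True
    hence "h z1 + g z1 = h z2 + g z2" using Re_eq by (simp add: complex_eq_iff)
    thus ?thesis using inj z by (auto dest: inj_onD)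
  next
    case False
    hence "Im (harm h g z1) \<noteq> Im (harm h g z2)"
      using shear_vertical_increasing[OF hol lu inj cid z(1,2)]
        shear_vertical_increasing[OF hol lu inj cid z(2,1)] Re_eq
      by (cases "Im (h z1 + g z1) < Im (h z2 + g z2)") auto
    thus ?thesis using z(3) by simp
  qed
qed

text \<open>Since \<open>Re f = Re F\<close>, every vertical slice of \<open>f(E)\<close> is the continuous image (under
  \<open>f \<circ> F\<^sup>-\<^sup>1\<close>) of the corresponding slice of \<open>F(E)\<close>.\<close>

lemma shear_convex_imag_dir:
  fixes h g :: "complex \<Rightarrow> complex"
  assumes hol: "h holomorphic_on \<E>" "g holomorphic_on \<E>"
    and inj: "inj_on (\<lambda>z. h z + g z) \<E>"
    and cid: "convex_imag_dir ((\<lambda>z. h z + g z) ` \<E>)"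
  shows "convex_imag_dir (harm h g ` \<E>)"
  unfolding convex_imag_dir_def
proof
  fix c :: real
  define F where "F = (\<lambda>z. h z + g z)"
  have oE: "open \<E>" by (simp add: unit_disk_def)
  have Re_harm: "Re (harm h g z) = Re (F z)" for z by (simp add: harm_def F_def)
  have holF: "F holomorphic_on \<E>" unfolding F_def using hol by (intro holomorphic_intros)
  have injF: "inj_on F \<E>" using inj by (simp add: F_def)
  obtain K where holK: "K holomorphic_on F ` \<E>" and KF: "\<And>z. z \<in> \<E> \<Longrightarrow> K (F z) = z"
    by (rule holomorphic_has_inverse[OF holF oE injF]) blast
  have level: "harm h g ` \<E> \<inter> {w. Re w = c} = (harm h g \<circ> K) ` (F ` \<E> \<inter> {w. Re w = c})"
  proof (intro equalityI subsetI)
    fix v assume "v \<in> harm h g ` \<E> \<inter> {w. Re w = c}"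
    then obtain z where z: "z \<in> \<E>" "v = harm h g z" "Re v = c" by auto
    hence "F z \<in> F ` \<E> \<inter> {w. Re w = c}" using Re_harm by auto
    moreover have "v = (harm h g \<circ> K) (F z)" using KF z by simp
    ultimately show "v \<in> (harm h g \<circ> K) ` (F ` \<E> \<inter> {w. Re w = c})" by (rule rev_image_eqI)
  next
    fix v assume "v \<in> (harm h g \<circ> K) ` (F ` \<E> \<inter> {w. Re w = c})"
    then obtain z where "z \<in> \<E>" "Re (F z) = c" "v = harm h g (K (F z))" by auto
    thus "v \<in> harm h g ` \<E> \<inter> {w. Re w = c}" using KF Re_harm by auto
  qed
  have cont: "continuous_on \<E> (harm h g)"
    unfolding harm_def using hol by (intro continuous_intros holomorphic_on_imp_continuous_on)
  have "continuous_on (F ` \<E> \<inter> {w. Re w = c}) (harm h g \<circ> K)"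
  proof (rule continuous_on_compose)
    show "continuous_on (F ` \<E> \<inter> {w. Re w = c}) K"
      using holomorphic_on_imp_continuous_on[OF holK] by (rule continuous_on_subset) auto
    show "continuous_on (K ` (F ` \<E> \<inter> {w. Re w = c})) (harm h g)"
      using cont by (rule continuous_on_subset) (auto simp: KF)
  qed
  moreover have "connected (F ` \<E> \<inter> {w. Re w = c})"
    using cid unfolding convex_imag_dir_def F_def by blast
  ultimately show "connected (harm h g ` \<E> \<inter> {w. Re w = c})"
    unfolding level by (rule connected_continuous_image)
qed

lemma shear_construction:
  fixes h g :: "complex \<Rightarrow> complex"
  assumes hol: "h holomorphic_on \<E>" "g holomorphic_on \<E>"
    and lu: "loc_univ_sense_pres h g"
    and inj: "inj_on (\<lambda>z. h z + g z) \<E>"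
    and cid: "convex_imag_dir ((\<lambda>z. h z + g z) ` \<E>)"
  shows "inj_on (harm h g) \<E> \<and> open (harm h g ` \<E>) \<and> convex_imag_dir (harm h g ` \<E>)"
proof (intro conjI)
  show inj_harm: "inj_on (harm h g) \<E>" by (rule shear_injective[OF hol lu inj cid])
  have cont: "continuous_on \<E> (harm h g)"
    unfolding harm_def using hol by (intro continuous_intros holomorphic_on_imp_continuous_on)
  have oE: "open \<E>" by (simp add: unit_disk_def)
  show "open (harm h g ` \<E>)" by (rule invariance_of_domain[OF cont oE inj_harm])
  show "convex_imag_dir (harm h g ` \<E>)" by (rule shear_convex_imag_dir[OF hol inj cid])
qed

section \<open>The hyperbolic tangent on a strip\<close>

text \<open>The strip \<open>|Im \<zeta>| < \<pi>/4\<close> is mapped by \<open>tanh\<close> onto the unit disk.\<close>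

definition strip :: "complex set" where
  "strip = {\<zeta>. \<bar>Im \<zeta>\<bar> < pi / 4}"

lemma convex_strip: "convex strip"
proof -
  have halves: "strip = {\<zeta>. Im \<zeta> < pi / 4} \<inter> {\<zeta>. Im \<zeta> > - (pi / 4)}"
    by (auto simp: strip_def abs_less_iff)
  show ?thesis
    unfolding halves by (intro convex_Int convex_halfspace_Im_lt convex_halfspace_Im_gt)
qed

lemma exp_double_complex: "exp (2 * z) = exp z * exp (z :: complex)"
  by (simp only: mult_2 exp_add)

lemma tanh_exp2: "tanh (z :: complex) = (exp (2 * z) - 1) / (exp (2 * z) + 1)"
proof -
  have "tanh z = ((exp z - exp (- z)) * exp z) / ((exp z + exp (- z)) * exp z)"
    unfolding tanh_altdef by (simp add: mult_divide_mult_cancel_right)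
  also have "\<dots> = (exp z * exp z - 1) / (exp z * exp z + 1)"
    by (simp only: left_diff_distrib distrib_right exp_minus_inverse mult.commute[of "exp (- z)"])
  finally show ?thesis unfolding exp_double_complex .
qed

definition carath :: "complex \<Rightarrow> complex" where
  "carath w = (1 - w) / (1 + w)"

lemma Re_carath_pos:
  fixes w :: complex assumes "cmod w < 1" shows "Re (carath w) > 0"
proof -
  have "1 + w \<noteq> 0" using assms by (metis add.inverse_unique norm_minus_cancel norm_one less_irrefl)
  hence den: "(1 + Re w)\<^sup>2 + (Im w)\<^sup>2 > 0" by (simp add: complex_eq_iff sum_power2_gt_zero_iff)
  have "(Re w)\<^sup>2 + (Im w)\<^sup>2 < 1" using assms by (simp add: cmod_def power2_eq_square)
  moreover have "Re (carath w) = (1 - ((Re w)\<^sup>2 + (Im w)\<^sup>2)) / ((1 + Re w)\<^sup>2 + (Im w)\<^sup>2)"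
    by (simp add: carath_def Re_divide power2_eq_square algebra_simps)
  ultimately show ?thesis using den by simp
qed

text \<open>\<open>tanh\<close> maps the strip into the disk (with \<open>u = exp (2\<zeta>)\<close>, \<open>Re u > 0\<close> gives
  \<open>|u - 1| < |u + 1|\<close>) and is holomorphic there; conversely every point of the disk is attained.\<close>

lemma tanh_strip:
  assumes "\<zeta> \<in> strip"
  shows "tanh \<zeta> \<in> \<E>" "cosh \<zeta> \<noteq> 0"
proof -
  define u where "u = exp (2 * \<zeta>)"
  have "\<bar>Im (2 * \<zeta>)\<bar> < pi / 2" using assms by (simp add: strip_def)
  hence Re_u: "Re u > 0" by (simp add: u_def Re_exp cos_gt_zero_pi)
  hence "u \<noteq> -1" by auto
  thus "cosh \<zeta> \<noteq> 0" by (simp add: cosh_zero_iff u_def exp_double_complex power2_eq_square)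
  have "(cmod (u - 1))\<^sup>2 < (cmod (u + 1))\<^sup>2" using Re_u
    unfolding cmod_power2 by (simp add: power2_eq_square algebra_simps)
  hence "cmod (u - 1) < cmod (u + 1)" using power2_less_imp_less by fastforce
  hence "cmod ((u - 1) / (u + 1)) < 1" by (simp add: norm_divide divide_less_eq_1)
  thus "tanh \<zeta> \<in> \<E>" by (simp add: tanh_exp2 unit_disk_def u_def)
qed

lemma tanh_strip_onto:
  assumes "z \<in> \<E>"
  shows "\<exists>\<zeta>\<in>strip. tanh \<zeta> = z"
proof -
  have z: "cmod z < 1" using assms by (simp add: unit_disk_def)
  define w where "w = (1 + z) / (1 - z)"
  have "Re w > 0" using Re_carath_pos[of "-z"] z by (simp add: w_def carath_def)
  hence "\<bar>Im (Ln w)\<bar> < pi / 2" "w \<noteq> 0" using Re_Ln_pos_lt_imp by auto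
  moreover have "1 - z \<noteq> 0" using z by auto
  hence "(w - 1) / (w + 1) = z" by (simp add: w_def field_simps)
  ultimately have "Ln w / 2 \<in> strip" "tanh (Ln w / 2) = z" by (simp_all add: strip_def tanh_exp2)
  thus ?thesis by blast
qed

lemma tanh_strip_image: "tanh ` strip = \<E>"
  using tanh_strip(1) tanh_strip_onto by blast

lemma tanh_horizontal_limit_top: "((\<lambda>x. tanh (Complex x s)) \<longlongrightarrow> 1) at_top"
proof -
  have "((\<lambda>x::real. exp (- 2 * x)) \<longlongrightarrow> 0) at_top" by real_asymp
  hence "((\<lambda>x. norm (exp (- 2 * Complex x s))) \<longlongrightarrow> 0) at_top"
    by (simp add: norm_exp_eq_Re)
  hence "((\<lambda>x. exp (- 2 * Complex x s)) \<longlongrightarrow> 0) at_top"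
    by (simp only: tendsto_norm_zero_iff)
  hence "((\<lambda>x. - ((exp (- 2 * Complex x s) - 1) / (exp (- 2 * Complex x s) + 1))) \<longlongrightarrow> - ((0 - 1) / (0 + 1))) at_top"
    by (intro tendsto_intros) auto
  moreover have "tanh (Complex x s) = - ((exp (- 2 * Complex x s) - 1) / (exp (- 2 * Complex x s) + 1))" for x
    using tanh_exp2[of "- Complex x s"] by simp (metis minus_minus)
  ultimately show ?thesis by simp
qed

lemma tanh_horizontal_limit_bot: "((\<lambda>x. tanh (Complex x s)) \<longlongrightarrow> -1) at_bot"
proof -
  have "((\<lambda>x. tanh (Complex (- x) (- s))) \<longlongrightarrow> 1) at_bot"
    using filterlim_compose[OF tanh_horizontal_limit_top filterlim_uminus_at_top_at_bot] by simp
  hence "((\<lambda>x. - tanh (Complex (- x) (- s))) \<longlongrightarrow> -1) at_bot" by (rule tendsto_minus)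
  moreover have "Complex (- x) (- s) = - Complex x s" for x by (simp add: complex_eq_iff)
  ultimately show ?thesis by simp
qed

section \<open>The two model maps and the Caratheodory form of the derivative\<close>

definition F_theta :: "real \<Rightarrow> complex \<Rightarrow> complex" where
  "F_theta \<theta> z = 1 / (2 * \<i> * complex_of_real (sin \<theta>)) *
     Ln ((1 + z * exp (\<i> * \<theta>)) / (1 + z * exp (- \<i> * \<theta>)))"

definition F_alpha :: "real \<Rightarrow> complex \<Rightarrow> complex" where
  "F_alpha \<alpha> z = z * (1 - \<alpha> * z) / (1 - z\<^sup>2)"

definition F_conv :: "real \<Rightarrow> real \<Rightarrow> real \<Rightarrow> complex \<Rightarrow> complex" where
  "F_conv t \<theta> \<alpha> z = t * F_theta \<theta> z + (1 - t) * F_alpha \<alpha> z"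

text \<open>\<open>(1 - z\<^sup>2) F'(z)\<close> is the following convex combination of Caratheodory functions.\<close>

definition carath_comb :: "real \<Rightarrow> real \<Rightarrow> real \<Rightarrow> complex \<Rightarrow> complex" where
  "carath_comb t \<theta> \<alpha> z =
     t *\<^sub>R ((1/2) *\<^sub>R carath (z * exp (\<i> * \<theta>)) + (1/2) *\<^sub>R carath (z * exp (- \<i> * \<theta>))) +
     (1 - t) *\<^sub>R (((1 - \<alpha>) / 2) *\<^sub>R carath (- z) + ((1 + \<alpha>) / 2) *\<^sub>R carath z)"

lemma disk_unimodular_nonzero:
  fixes a :: complex assumes "cmod a = 1" "z \<in> \<E>" shows "1 + z * a \<noteq> 0"
proof
  assume "1 + z * a = 0"
  hence "cmod (z * a) = 1" by (metis add.inverse_unique norm_minus_cancel norm_one)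
  with assms show False by (simp add: norm_mult unit_disk_def)
qed

lemma disk_square_ne_1:
  assumes "z \<in> \<E>" shows "1 - z\<^sup>2 \<noteq> 0"
proof
  assume eq: "1 - z\<^sup>2 = 0"
  have "(cmod z)\<^sup>2 = cmod (z\<^sup>2)" by (simp add: norm_power)
  also have "\<dots> = 1" using eq by simp
  finally have "(cmod z)\<^sup>2 = 1" .
  moreover have "cmod z < 1" using assms by (simp add: unit_disk_def)
  ultimately show False using power_strict_mono[of "cmod z" 1 2] by simp
qed

lemma carath_pair:
  fixes a b z :: complex
  assumes ab: "a * b = 1" and na: "1 + z * a \<noteq> 0" and nb: "1 + z * b \<noteq> 0"
  shows "carath (z * a) + carath (z * b) = 2 * (1 - z\<^sup>2) / ((1 + z * a) * (1 + z * b))"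
proof -
  have "(1 - z * a) * (1 + z * b) + (1 - z * b) * (1 + z * a) = 2 - 2 * z\<^sup>2 * (a * b)"
    by (simp add: algebra_simps power2_eq_square)
  thus ?thesis using na nb by (simp add: carath_def add_frac_eq ab)
qed

lemma carath_antipodal:
  fixes z A :: complex
  assumes "1 - z\<^sup>2 \<noteq> 0"
  shows "(1 - A) * carath (- z) + (1 + A) * carath z = 2 * (1 - 2 * A * z + z\<^sup>2) / (1 - z\<^sup>2)"
proof -
  have split: "1 - z\<^sup>2 = (1 - z) * (1 + z)" by (simp add: power2_eq_square algebra_simps)
  hence nz: "1 - z \<noteq> 0" "1 + z \<noteq> 0" using assms by auto
  have "(1 - A) * carath (- z) + (1 + A) * carath z
      = ((1 - A) * (1 + z) * (1 + z) + (1 + A) * (1 - z) * (1 - z)) / ((1 - z) * (1 + z))"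
    using nz by (simp add: carath_def field_simps)
  also have "(1 - A) * (1 + z) * (1 + z) + (1 + A) * (1 - z) * (1 - z) = 2 * (1 - 2 * A * z + z\<^sup>2)"
    by (simp add: algebra_simps power2_eq_square)
  finally show ?thesis unfolding split .
qed

lemma F_theta_arg_not_nonpos:
  fixes a b z :: complex
  assumes a: "cmod a = 1" and b: "cmod b = 1" and z: "z \<in> \<E>"
  shows "(1 + z * a) / (1 + z * b) \<notin> \<real>\<^sub>\<le>\<^sub>0"
proof
  assume "(1 + z * a) / (1 + z * b) \<in> \<real>\<^sub>\<le>\<^sub>0"
  then obtain r where r: "r \<le> 0" "(1 + z * a) / (1 + z * b) = of_real r"
    by (auto simp: nonpos_Reals_def)
  hence "z * (a - r * b) = of_real (r - 1)"
    using disk_unimodular_nonzero[OF b z] by (simp add: field_simps)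
  hence "cmod z * cmod (a - r * b) = \<bar>r - 1\<bar>"
    by (metis norm_mult norm_of_real)
  hence "cmod z * cmod (a - r * b) = 1 - r" using r(1) by simp
  moreover have "cmod (a - r * b) \<le> 1 - r"
    using norm_triangle_ineq4[of a "r * b"] a b r by (simp add: norm_mult)
  hence "cmod z * cmod (a - r * b) \<le> cmod z * (1 - r)" by (rule mult_left_mono) simp
  moreover have "cmod z * (1 - r) < 1 - r"
    using mult_strict_right_mono[of "cmod z" 1 "1 - r"] z r(1) by (simp add: unit_disk_def)
  ultimately show False by simp
qed

lemma F_theta_deriv:
  assumes z: "z \<in> \<E>" and s: "sin \<theta> \<noteq> 0"
  shows "(F_theta \<theta> has_field_derivative
           (carath (z * exp (\<i> * \<theta>)) + carath (z * exp (- \<i> * \<theta>))) / (2 * (1 - z\<^sup>2))) (at z)"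
proof -
  define a where "a = exp (\<i> * complex_of_real \<theta>)"
  define b where "b = exp (- \<i> * complex_of_real \<theta>)"
  have ab: "a * b = 1" "cmod a = 1" "cmod b = 1" "a - b = 2 * \<i> * sin \<theta>"
    by (simp_all add: a_def b_def norm_exp_eq_Re exp_minus_inverse)
       (simp add: exp_minus complex_eq_iff Re_exp Im_exp)
  have na: "1 + z * a \<noteq> 0" and nb: "1 + z * b \<noteq> 0"
    using disk_unimodular_nonzero z ab by auto
  have "((\<lambda>z. (1 + z * a) / (1 + z * b)) has_field_derivative
          (a * (1 + z * b) - (1 + z * a) * b) / ((1 + z * b) * (1 + z * b))) (at z)"
    using nb by (auto intro!: derivative_eq_intros)
  hence "(F_theta \<theta> has_field_derivative 1 / (2 * \<i> * sin \<theta>) *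
          (inverse ((1 + z * a) / (1 + z * b)) *
           ((a * (1 + z * b) - (1 + z * a) * b) / ((1 + z * b) * (1 + z * b))))) (at z)"
    unfolding F_theta_def a_def[symmetric] b_def[symmetric]
    by (intro DERIV_cmult DERIV_chain2[OF has_field_derivative_Ln]
              F_theta_arg_not_nonpos z ab(2,3))
  moreover have "1 / (2 * \<i> * sin \<theta>) * (inverse ((1 + z * a) / (1 + z * b)) *
          ((a * (1 + z * b) - (1 + z * a) * b) / ((1 + z * b) * (1 + z * b))))
        = (carath (z * a) + carath (z * b)) / (2 * (1 - z\<^sup>2))"
  proof -
    have num: "a * (1 + z * b) - (1 + z * a) * b = 2 * \<i> * sin \<theta>"
      using ab(4) by (simp add: algebra_simps)
    have "1 / c * (inverse (A / B) * (c / (B * B))) = 1 / (A * B)"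
      if "A \<noteq> 0" "B \<noteq> 0" "c \<noteq> 0" for A B c :: complex
      using that by (simp add: field_simps)
    hence "1 / (2 * \<i> * sin \<theta>) * (inverse ((1 + z * a) / (1 + z * b)) *
          ((2 * \<i> * sin \<theta>) / ((1 + z * b) * (1 + z * b))))
        = 1 / ((1 + z * a) * (1 + z * b))"
      using na nb s by simp
    hence "1 / (2 * \<i> * sin \<theta>) * (inverse ((1 + z * a) / (1 + z * b)) *
          ((a * (1 + z * b) - (1 + z * a) * b) / ((1 + z * b) * (1 + z * b))))
        = 1 / ((1 + z * a) * (1 + z * b))"
      unfolding num .
    also have "\<dots> = (carath (z * a) + carath (z * b)) / (2 * (1 - z\<^sup>2))"
      using disk_square_ne_1[OF z] by (simp add: carath_pair[OF ab(1) na nb])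
    finally show ?thesis .
  qed
  ultimately have "(F_theta \<theta> has_field_derivative
           (carath (z * a) + carath (z * b)) / (2 * (1 - z\<^sup>2))) (at z)"
    by (simp only:)
  thus ?thesis by (simp only: a_def b_def)
qed

lemma F_alpha_deriv:
  assumes "z \<in> \<E>"
  shows "(F_alpha \<alpha> has_field_derivative
           ((1 - of_real \<alpha>) * carath (- z) + (1 + of_real \<alpha>) * carath z) / (2 * (1 - z\<^sup>2))) (at z)"
proof -
  define A where "A = (of_real \<alpha> :: complex)"
  define D where "D = 1 - z\<^sup>2"
  have nz: "D \<noteq> 0" using disk_square_ne_1[OF assms] by (simp add: D_def)
  have deriv: "(F_alpha \<alpha> has_field_derivative
          ((1 - A * z - A * z) * D - z * (1 - A * z) * (- (2 * z))) / (D * D)) (at z)"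
    unfolding F_alpha_def[abs_def] A_def D_def using nz[unfolded D_def]
    by (auto intro!: derivative_eq_intros simp: algebra_simps)
  have num: "(1 - A * z - A * z) * D - z * (1 - A * z) * (- (2 * z)) = 1 - 2 * A * z + z\<^sup>2"
    by (simp add: D_def algebra_simps power2_eq_square)
  have carath_form:
    "((1 - A) * carath (- z) + (1 + A) * carath z) / (2 * D) = (1 - 2 * A * z + z\<^sup>2) / (D * D)"
  proof -
    define N where "N = 1 - 2 * A * z + z\<^sup>2"
    have "(1 - A) * carath (- z) + (1 + A) * carath z = 2 * N / D"
      using carath_antipodal[of z A] nz by (simp add: D_def N_def)
    hence "((1 - A) * carath (- z) + (1 + A) * carath z) / (2 * D) = (2 * N / D) / (2 * D)" by simp
    also have "\<dots> = N / (D * D)" using nz by simp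
    finally show ?thesis unfolding N_def .
  qed
  show ?thesis
    unfolding A_def[symmetric] D_def[symmetric] using deriv unfolding num carath_form .
qed

lemma carath_comb_explicit:
  "carath_comb t \<theta> \<alpha> z =
     (of_real t * (carath (z * exp (\<i> * \<theta>)) + carath (z * exp (- \<i> * \<theta>))) +
      (1 - of_real t) * ((1 - of_real \<alpha>) * carath (- z) + (1 + of_real \<alpha>) * carath z)) / 2"
proof -
  have "t *\<^sub>R ((1/2) *\<^sub>R X + (1/2) *\<^sub>R Y) + (1 - t) *\<^sub>R (((1 - \<alpha>) / 2) *\<^sub>R U + ((1 + \<alpha>) / 2) *\<^sub>R V)
      = (of_real t * (X + Y) + (1 - of_real t) * ((1 - of_real \<alpha>) * U + (1 + of_real \<alpha>) * V)) / 2"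
    for X Y U V :: complex
    by (simp add: scaleR_conv_of_real field_simps)
  thus ?thesis unfolding carath_comb_def .
qed

lemma F_conv_deriv:
  assumes z: "z \<in> \<E>" and s: "sin \<theta> \<noteq> 0"
  shows "(F_conv t \<theta> \<alpha> has_field_derivative carath_comb t \<theta> \<alpha> z / (1 - z\<^sup>2)) (at z)"
proof -
  have combine: "of_real t * (P / (2 * D)) + (1 - of_real t) * (Q / (2 * D))
      = ((of_real t * P + (1 - of_real t) * Q) / 2) / D" if "D \<noteq> 0" for P Q D :: complex
    using that by (simp add: field_simps)
  have "(F_conv t \<theta> \<alpha> has_field_derivative
      of_real t * ((carath (z * exp (\<i> * \<theta>)) + carath (z * exp (- \<i> * \<theta>))) / (2 * (1 - z\<^sup>2))) +
      (1 - of_real t) * (((1 - of_real \<alpha>) * carath (- z) + (1 + of_real \<alpha>) * carath z) / (2 * (1 - z\<^sup>2))))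
        (at z)"
    unfolding F_conv_def[abs_def] by (intro DERIV_add DERIV_cmult F_theta_deriv F_alpha_deriv z s)
  thus ?thesis unfolding combine[OF disk_square_ne_1[OF z]] carath_comb_explicit .
qed

text \<open>Each Caratheodory function has positive real part, hence so has their convex combination.\<close>

lemma Re_carath_comb_pos:
  assumes "z \<in> \<E>" "0 \<le> t" "t \<le> 1" "-1 \<le> \<alpha>" "\<alpha> \<le> 1"
  shows "Re (carath_comb t \<theta> \<alpha> z) > 0"
proof -
  define H where "H = {w. Re w > 0}"
  have H: "convex H" by (simp add: H_def convex_halfspace_Re_gt)
  have unit: "carath (z * w) \<in> H" if "cmod w = 1" for w
    using Re_carath_pos[of "z * w"] that assms(1) by (simp add: H_def carath_def norm_mult unit_disk_def)
  have pair: "(1/2) *\<^sub>R carath (z * exp (\<i> * \<theta>)) + (1/2) *\<^sub>R carath (z * exp (- \<i> * \<theta>)) \<in> H"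
    using unit[of "exp (\<i> * \<theta>)"] unit[of "exp (- \<i> * \<theta>)"]
    by (intro convexD[OF H]) (simp_all add: norm_exp_eq_Re)
  have "carath z \<in> H" "carath (- z) \<in> H" using unit[of 1] unit[of "-1"] by simp_all
  hence antipodal: "((1 - \<alpha>) / 2) *\<^sub>R carath (- z) + ((1 + \<alpha>) / 2) *\<^sub>R carath z \<in> H"
    using assms(4,5) by (intro convexD[OF H]) (simp_all add: add_divide_distrib[symmetric])
  have "carath_comb t \<theta> \<alpha> z \<in> H"
    unfolding carath_comb_def by (rule convexD[OF H pair antipodal]) (use assms(2,3) in simp_all)
  thus ?thesis by (simp add: H_def)
qed

section \<open>The combination pulled back to the strip\<close>

definition F_strip :: "real \<Rightarrow> real \<Rightarrow> real \<Rightarrow> complex \<Rightarrow> complex" where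
  "F_strip t \<theta> \<alpha> \<zeta> = F_conv t \<theta> \<alpha> (tanh \<zeta>)"

lemma F_alpha_tanh:
  assumes "\<zeta> \<in> strip"
  shows "F_alpha \<alpha> (tanh \<zeta>) =
           (1 - of_real \<alpha>) / 4 * (exp (2 * \<zeta>) - 1) + (1 + of_real \<alpha>) / 4 * (1 - exp (- 2 * \<zeta>))"
proof -
  define u where "u = exp (2 * \<zeta>)"
  define A where "A = (of_real \<alpha> :: complex)"
  have "u \<noteq> - 1"
    using tanh_strip(2)[OF assms] by (simp add: u_def cosh_zero_iff exp_double_complex power2_eq_square)
  hence u: "u \<noteq> 0" "u + 1 \<noteq> 0" by (auto simp: u_def eq_neg_iff_add_eq_0)
  define S where "S = (u + 1)\<^sup>2"
  have S: "S \<noteq> 0" using u by (simp add: S_def)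
  have "1 - ((u - 1) / (u + 1))\<^sup>2 = ((u + 1)\<^sup>2 - (u - 1)\<^sup>2) / S"
    using S unfolding S_def power_divide by (simp add: diff_divide_distrib)
  also have "(u + 1)\<^sup>2 - (u - 1)\<^sup>2 = 4 * u" by (simp add: power2_eq_square algebra_simps)
  finally have den: "1 - ((u - 1) / (u + 1))\<^sup>2 = 4 * u / S" .
  have num: "(u - 1) / (u + 1) * (1 - A * ((u - 1) / (u + 1))) = (u - 1) * ((u + 1) - A * (u - 1)) / S"
    using u by (simp add: S_def field_simps power2_eq_square)
  have "F_alpha \<alpha> ((u - 1) / (u + 1)) = (u - 1) * ((u + 1) - A * (u - 1)) / (4 * u)"
    unfolding F_alpha_def A_def[symmetric] num den using S by simp
  also have "\<dots> = (1 - A) / 4 * (u - 1) + (1 + A) / 4 * (1 - 1 / u)"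
    using u by (simp add: field_simps)
  finally have calc: "F_alpha \<alpha> ((u - 1) / (u + 1)) = (1 - A) / 4 * (u - 1) + (1 + A) / 4 * (1 - 1 / u)" .
  have tanh_u: "tanh \<zeta> = (u - 1) / (u + 1)" by (simp add: tanh_exp2 u_def)
  have inv: "1 / u = exp (- 2 * \<zeta>)" unfolding u_def by (simp add: exp_minus inverse_eq_divide)
  show ?thesis unfolding tanh_u A_def[symmetric] inv[symmetric] u_def[symmetric] by (rule calc)
qed

context
  fixes t \<theta> \<alpha> :: real
  assumes \<theta>: "0 < \<theta>" "\<theta> < pi" and t: "0 \<le> t" "t \<le> 1" and \<alpha>: "-1 \<le> \<alpha>" "\<alpha> \<le> 1"
begin

lemma sin_theta_nonzero: "sin \<theta> \<noteq> 0"
  using \<theta> sin_gt_zero by fastforce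

lemma F_strip_deriv:
  assumes "\<zeta> \<in> strip"
  shows "(F_strip t \<theta> \<alpha> has_field_derivative carath_comb t \<theta> \<alpha> (tanh \<zeta>)) (at \<zeta>)"
proof -
  have "((\<lambda>\<zeta>. F_conv t \<theta> \<alpha> (tanh \<zeta>)) has_field_derivative
          carath_comb t \<theta> \<alpha> (tanh \<zeta>) / (1 - (tanh \<zeta>)\<^sup>2) * ((1 - (tanh \<zeta>)\<^sup>2) * 1)) (at \<zeta>)"
    using F_conv_deriv[OF tanh_strip(1)[OF assms] sin_theta_nonzero]
      has_field_derivative_tanh[OF tanh_strip(2)[OF assms] DERIV_ident]
    by (rule DERIV_chain2)
  thus ?thesis
    using disk_square_ne_1[OF tanh_strip(1)[OF assms]] by (simp add: F_strip_def[abs_def])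
qed

lemma F_strip_continuous: "continuous_on strip (F_strip t \<theta> \<alpha>)"
  using F_strip_deriv by (intro continuous_at_imp_continuous_on ballI DERIV_isCont) blast

lemma Re_F_strip_deriv_pos: "\<zeta> \<in> strip \<Longrightarrow> Re (carath_comb t \<theta> \<alpha> (tanh \<zeta>)) > 0"
  by (intro Re_carath_comb_pos tanh_strip(1) t \<alpha>)

lemma F_strip_inj: "inj_on (F_strip t \<theta> \<alpha>) strip"
  by (rule noshiro_warschawski_inj[OF convex_strip F_strip_deriv Re_F_strip_deriv_pos])

lemma F_strip_horizontal_mono:
  assumes "\<bar>s\<bar> < pi / 4" "x < y"
  shows "Re (F_strip t \<theta> \<alpha> (Complex x s)) < Re (F_strip t \<theta> \<alpha> (Complex y s))"
  using assms
  by (intro noshiro_warschawski_horizontal[OF convex_strip _ _ _ _ F_strip_deriv Re_F_strip_deriv_pos])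
     (simp_all add: strip_def)

lemma Re_F_strip_horizontal:
  assumes "\<bar>s\<bar> < pi / 4"
  shows "Re (F_strip t \<theta> \<alpha> (Complex x s)) =
           t * Re (F_theta \<theta> (tanh (Complex x s)))
           + (1 - t) * ((1 - \<alpha>) / 4 * (exp (2 * x) * cos (2 * s) - 1)
                        + (1 + \<alpha>) / 4 * (1 - exp (- 2 * x) * cos (2 * s)))"
  using F_alpha_tanh[of "Complex x s" \<alpha>] assms
  by (simp add: F_strip_def F_conv_def strip_def Re_exp)

text \<open>\<open>F_theta\<close> extends continuously to \<open>\<plusminus>1\<close> (the logarithm's argument is \<open>\<plusminus>exp (i\<theta>)\<close>
  there).\<close>

lemma F_theta_continuous_pm1: "isCont (F_theta \<theta>) 1" "isCont (F_theta \<theta>) (-1)"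
proof -
  define a where "a = exp (\<i> * complex_of_real \<theta>)"
  define b where "b = exp (- \<i> * complex_of_real \<theta>)"
  have ab: "a * b = 1" by (simp add: a_def b_def exp_minus_inverse)
  have Im_a: "Im a = sin \<theta>" and Im_b: "Im b = - sin \<theta>" by (simp_all add: a_def b_def Im_exp)
  have sin: "sin \<theta> > 0" using \<theta> by (simp add: sin_gt_zero)
  have b1: "1 + b \<noteq> 0" "1 - b \<noteq> 0" using Im_b sin by (auto simp: complex_eq_iff)
  have "(1 + 1 * a) / (1 + 1 * b) = a" "(1 + (-1) * a) / (1 + (-1) * b) = -a"
    using b1 ab by (simp_all add: field_simps)
  moreover have "a \<notin> \<real>\<^sub>\<le>\<^sub>0" "-a \<notin> \<real>\<^sub>\<le>\<^sub>0" using Im_a sin by (auto simp: complex_nonpos_Reals_iff)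
  moreover have F: "F_theta \<theta> = (\<lambda>z. 1 / (2 * \<i> * sin \<theta>) * Ln ((1 + z * a) / (1 + z * b)))"
    by (simp add: fun_eq_iff F_theta_def a_def b_def)
  ultimately show "isCont (F_theta \<theta>) 1" "isCont (F_theta \<theta>) (-1)"
    unfolding F using b1 sin by (auto intro!: continuous_intros)
qed

lemma cos_double_pos: "\<bar>s\<bar> < pi / 4 \<Longrightarrow> cos (2 * s) > 0"
  by (intro cos_gt_zero_pi) auto

text \<open>Along every horizontal line of the strip, the real part of the strip map tends to one and the
  same limit in the extended reals as \<open>x \<rightarrow> \<infinity>\<close> (a finite one when \<open>(1 - t)(1 - \<alpha>) = 0\<close>,
  \<open>\<infinity>\<close> otherwise), and likewise as \<open>x \<rightarrow> -\<infinity>\<close>.\<close>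

lemma F_strip_limit_top:
  "\<exists>L. \<forall>s. \<bar>s\<bar> < pi / 4 \<longrightarrow> ((\<lambda>x. ereal (Re (F_strip t \<theta> \<alpha> (Complex x s)))) \<longlongrightarrow> L) at_top"
proof -
  define P where "P = (1 - t) * (1 - \<alpha>) / 4"
  define Q where "Q = (1 - t) * (1 + \<alpha>) / 4"
  have "((\<lambda>x. ereal (Re (F_strip t \<theta> \<alpha> (Complex x s))))
          \<longlongrightarrow> (if P = 0 then ereal (t * Re (F_theta \<theta> 1) + Q - P) else \<infinity>)) at_top"
    if s: "\<bar>s\<bar> < pi / 4" for s
  proof -
    define C where "C = (\<lambda>x. t * Re (F_theta \<theta> (tanh (Complex x s))) + Q * (1 - exp (- 2 * x) * cos (2 * s)) - P)"
    have eq: "Re (F_strip t \<theta> \<alpha> (Complex x s)) = C x + P * (cos (2 * s) * exp (2 * x))" for x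
      using Re_F_strip_horizontal[OF s, of x] by (simp add: C_def P_def Q_def algebra_simps)
    have "((\<lambda>x. F_theta \<theta> (tanh (Complex x s))) \<longlongrightarrow> F_theta \<theta> 1) at_top"
      by (rule isCont_tendsto_compose[OF F_theta_continuous_pm1(1) tanh_horizontal_limit_top])
    moreover have "((\<lambda>x::real. exp (- 2 * x)) \<longlongrightarrow> 0) at_top" by real_asymp
    ultimately have "(C \<longlongrightarrow> t * Re (F_theta \<theta> 1) + Q * (1 - 0 * cos (2 * s)) - P) at_top"
      unfolding C_def by (intro tendsto_intros)
    hence C: "(C \<longlongrightarrow> t * Re (F_theta \<theta> 1) + Q - P) at_top" by simp
    have "filterlim (\<lambda>x::real. exp (2 * x)) at_top at_top" by real_asymp
    hence "filterlim (\<lambda>x. cos (2 * s) * exp (2 * x)) at_top at_top"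
      by (rule filterlim_tendsto_pos_mult_at_top[OF tendsto_const cos_double_pos[OF s]])
    moreover have "P \<ge> 0" using t \<alpha> by (simp add: P_def)
    ultimately show ?thesis unfolding eq by (rule tendsto_ereal_with_exploding_term[OF C])
  qed
  thus ?thesis by blast
qed

lemma F_strip_limit_bot:
  "\<exists>L. \<forall>s. \<bar>s\<bar> < pi / 4 \<longrightarrow> ((\<lambda>x. ereal (Re (F_strip t \<theta> \<alpha> (Complex x s)))) \<longlongrightarrow> L) at_bot"
proof -
  define P where "P = (1 - t) * (1 - \<alpha>) / 4"
  define Q where "Q = (1 - t) * (1 + \<alpha>) / 4"
  define L where "L = (if Q = 0 then ereal (- (t * Re (F_theta \<theta> (-1)) - P + Q)) else \<infinity>)"
  have "((\<lambda>x. ereal (Re (F_strip t \<theta> \<alpha> (Complex x s)))) \<longlongrightarrow> - L) at_bot"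
    if s: "\<bar>s\<bar> < pi / 4" for s
  proof -
    define C where "C = (\<lambda>x. - (t * Re (F_theta \<theta> (tanh (Complex x s))) + P * (exp (2 * x) * cos (2 * s) - 1) + Q))"
    have eq: "- Re (F_strip t \<theta> \<alpha> (Complex x s)) = C x + Q * (cos (2 * s) * exp (- 2 * x))" for x
      using Re_F_strip_horizontal[OF s, of x] by (simp add: C_def P_def Q_def algebra_simps)
    have "((\<lambda>x. F_theta \<theta> (tanh (Complex x s))) \<longlongrightarrow> F_theta \<theta> (-1)) at_bot"
      by (rule isCont_tendsto_compose[OF F_theta_continuous_pm1(2) tanh_horizontal_limit_bot])
    moreover have "((\<lambda>x::real. exp (2 * x)) \<longlongrightarrow> 0) at_bot" by real_asymp
    ultimately have "(C \<longlongrightarrow> - (t * Re (F_theta \<theta> (-1)) + P * (0 * cos (2 * s) - 1) + Q)) at_bot"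
      unfolding C_def by (intro tendsto_intros)
    hence C: "(C \<longlongrightarrow> - (t * Re (F_theta \<theta> (-1)) - P + Q)) at_bot" by simp
    have "filterlim (\<lambda>x::real. exp (- 2 * x)) at_top at_bot" by real_asymp
    hence "filterlim (\<lambda>x. cos (2 * s) * exp (- 2 * x)) at_top at_bot"
      by (rule filterlim_tendsto_pos_mult_at_top[OF tendsto_const cos_double_pos[OF s]])
    moreover have "Q \<ge> 0" using t \<alpha> by (simp add: Q_def)
    ultimately have "((\<lambda>x. ereal (- Re (F_strip t \<theta> \<alpha> (Complex x s)))) \<longlongrightarrow> L) at_bot"
      unfolding eq L_def by (rule tendsto_ereal_with_exploding_term[OF C])
    hence "((\<lambda>x. - ereal (- Re (F_strip t \<theta> \<alpha> (Complex x s)))) \<longlongrightarrow> - L) at_bot"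
      by (rule tendsto_uminus_ereal)
    thus ?thesis by simp
  qed
  thus ?thesis by blast
qed

lemma F_strip_horizontal_range:
  "\<exists>Lm Lp. \<forall>s. \<bar>s\<bar> < pi / 4 \<longrightarrow>
     range (\<lambda>x. Re (F_strip t \<theta> \<alpha> (Complex x s))) = {y. Lm < ereal y \<and> ereal y < Lp}"
proof -
  obtain Lp where Lp: "\<And>s. \<bar>s\<bar> < pi / 4 \<Longrightarrow>
      ((\<lambda>x. ereal (Re (F_strip t \<theta> \<alpha> (Complex x s)))) \<longlongrightarrow> Lp) at_top"
    using F_strip_limit_top by blast
  obtain Lm where Lm: "\<And>s. \<bar>s\<bar> < pi / 4 \<Longrightarrow>
      ((\<lambda>x. ereal (Re (F_strip t \<theta> \<alpha> (Complex x s)))) \<longlongrightarrow> Lm) at_bot"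
    using F_strip_limit_bot by blast
  have "range (\<lambda>x. Re (F_strip t \<theta> \<alpha> (Complex x s))) = {y. Lm < ereal y \<and> ereal y < Lp}"
    if s: "\<bar>s\<bar> < pi / 4" for s
  proof (rule strict_mono_range_ereal[OF _ _ Lp[OF s] Lm[OF s]])
    have "continuous_on UNIV (\<lambda>x. Complex x s)" unfolding Complex_eq by (intro continuous_intros)
    moreover have "range (\<lambda>x. Complex x s) \<subseteq> strip" using s by (auto simp: strip_def)
    ultimately show "continuous_on UNIV (\<lambda>x. Re (F_strip t \<theta> \<alpha> (Complex x s)))"
      by (intro continuous_on_Re continuous_on_compose2[OF F_strip_continuous])
    show "strict_mono (\<lambda>x. Re (F_strip t \<theta> \<alpha> (Complex x s)))"
      by (rule strict_monoI) (rule F_strip_horizontal_mono[OF s])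
  qed
  thus ?thesis by blast
qed

lemma F_conv_inj: "inj_on (F_conv t \<theta> \<alpha>) \<E>"
proof -
  have "inj_on (F_conv t \<theta> \<alpha> \<circ> tanh) strip"
    using F_strip_inj by (simp add: F_strip_def[abs_def] o_def)
  hence "inj_on (F_conv t \<theta> \<alpha>) (tanh ` strip)" by (rule inj_on_imageI)
  thus ?thesis by (simp add: tanh_strip_image)
qed

lemma F_conv_convex_imag_dir: "convex_imag_dir (F_conv t \<theta> \<alpha> ` \<E>)"
proof -
  obtain Lm Lp where range: "\<And>s. \<bar>s\<bar> < pi / 4 \<Longrightarrow>
      range (\<lambda>x. Re (F_strip t \<theta> \<alpha> (Complex x s))) = {y. Lm < ereal y \<and> ereal y < Lp}"
    using F_strip_horizontal_range by blast
  have "connected (F_strip t \<theta> \<alpha> ` {\<zeta>. \<bar>Im \<zeta>\<bar> < pi / 4} \<inter> {w. Re w = c})" for c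
  proof (rule strip_level_set_connected)
    show "continuous_on {\<zeta>. \<bar>Im \<zeta>\<bar> < pi / 4} (F_strip t \<theta> \<alpha>)"
      using F_strip_continuous by (simp add: strip_def)
    show "\<And>s x y. \<bar>s\<bar> < pi / 4 \<Longrightarrow> x < y \<Longrightarrow>
            Re (F_strip t \<theta> \<alpha> (Complex x s)) < Re (F_strip t \<theta> \<alpha> (Complex y s))"
      by (rule F_strip_horizontal_mono)
    fix s s' x assume s: "\<bar>s\<bar> < pi / 4" and s': "\<bar>s'\<bar> < pi / 4"
    have "Re (F_strip t \<theta> \<alpha> (Complex x s)) \<in> range (\<lambda>x. Re (F_strip t \<theta> \<alpha> (Complex x s)))"
      by (rule rangeI)
    hence "Re (F_strip t \<theta> \<alpha> (Complex x s)) \<in> range (\<lambda>x. Re (F_strip t \<theta> \<alpha> (Complex x s')))"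
      unfolding range[OF s] range[OF s'] .
    thus "\<exists>x'. Re (F_strip t \<theta> \<alpha> (Complex x' s')) = Re (F_strip t \<theta> \<alpha> (Complex x s))" by auto
  qed
  moreover have "F_conv t \<theta> \<alpha> ` \<E> = F_conv t \<theta> \<alpha> ` tanh ` strip"
    by (simp only: tanh_strip_image)
  hence "F_conv t \<theta> \<alpha> ` \<E> = F_strip t \<theta> \<alpha> ` {\<zeta>. \<bar>Im \<zeta>\<bar> < pi / 4}"
    by (simp add: F_strip_def[abs_def] image_image strip_def)
  ultimately show ?thesis by (simp add: convex_imag_dir_def)
qed

end

lemma S_H_combination_basic:
  fixes t :: real and h1 g1 h2 g2 :: "complex \<Rightarrow> complex"
  assumes "S_H h1 g1" "S_H h2 g2"
  shows "(\<lambda>z. t * h1 z + (1 - t) * h2 z) holomorphic_on \<E>"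
    and "(\<lambda>z. t * g1 z + (1 - t) * g2 z) holomorphic_on \<E>"
    and "harm (\<lambda>z. t * h1 z + (1 - t) * h2 z) (\<lambda>z. t * g1 z + (1 - t) * g2 z) 0 = 0"
    and "deriv (\<lambda>z. t * h1 z + (1 - t) * h2 z) 0 = 1"
proof -
  have oE: "open \<E>" and E0: "0 \<in> \<E>" by (simp_all add: unit_disk_def)
  have hol: "h1 holomorphic_on \<E>" "h2 holomorphic_on \<E>" "g1 holomorphic_on \<E>" "g2 holomorphic_on \<E>"
    and norm: "harm h1 g1 0 = 0" "harm h2 g2 0 = 0" "deriv h1 0 = 1" "deriv h2 0 = 1"
    using assms by (auto simp: S_H_def)
  show "(\<lambda>z. t * h1 z + (1 - t) * h2 z) holomorphic_on \<E>"
       "(\<lambda>z. t * g1 z + (1 - t) * g2 z) holomorphic_on \<E>"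
    using hol by (auto intro!: holomorphic_intros)
  have "harm (\<lambda>z. t * h1 z + (1 - t) * h2 z) (\<lambda>z. t * g1 z + (1 - t) * g2 z) 0
      = t * harm h1 g1 0 + (1 - t) * harm h2 g2 0"
    by (simp add: harm_def algebra_simps)
  thus "harm (\<lambda>z. t * h1 z + (1 - t) * h2 z) (\<lambda>z. t * g1 z + (1 - t) * g2 z) 0 = 0"
    using norm by simp
  have "((\<lambda>z. t * h1 z + (1 - t) * h2 z) has_field_derivative t * deriv h1 0 + (1 - t) * deriv h2 0) (at 0)"
    using hol(1,2) by (intro DERIV_add DERIV_cmult holomorphic_derivI[OF _ oE E0])
  thus "deriv (\<lambda>z. t * h1 z + (1 - t) * h2 z) 0 = 1" using norm by (simp add: DERIV_imp_deriv)
qed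

theorem theorem2p12:
  fixes \<theta> \<alpha> t :: real
    and h\<^sub>\<theta> g\<^sub>\<theta> h\<^sub>\<alpha> g\<^sub>\<alpha> :: "complex \<Rightarrow> complex"
  assumes "0 < \<theta>" "\<theta> < pi"
    and "S_H h\<^sub>\<theta> g\<^sub>\<theta>"
    and "\<forall>z\<in>\<E>. h\<^sub>\<theta> z + g\<^sub>\<theta> z =
           1 / (2 * \<i> * complex_of_real (sin \<theta>)) *
           Ln ((1 + z * exp (\<i> * \<theta>)) / (1 + z * exp (- \<i> * \<theta>)))"
    and "-1 \<le> \<alpha>" "\<alpha> \<le> 1"
    and "S_H h\<^sub>\<alpha> g\<^sub>\<alpha>"
    and "\<forall>z\<in>\<E>. h\<^sub>\<alpha> z + g\<^sub>\<alpha> z = z * (1 - \<alpha> * z) / (1 - z\<^sup>2)"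
    and "0 \<le> t" "t \<le> 1"
    and "loc_univ_sense_pres
           (\<lambda>z. t * h\<^sub>\<theta> z + (1 - t) * h\<^sub>\<alpha> z)
           (\<lambda>z. t * g\<^sub>\<theta> z + (1 - t) * g\<^sub>\<alpha> z)"
  shows "S_H (\<lambda>z. t * h\<^sub>\<theta> z + (1 - t) * h\<^sub>\<alpha> z)
             (\<lambda>z. t * g\<^sub>\<theta> z + (1 - t) * g\<^sub>\<alpha> z)
       \<and> open (harm (\<lambda>z. t * h\<^sub>\<theta> z + (1 - t) * h\<^sub>\<alpha> z)
                     (\<lambda>z. t * g\<^sub>\<theta> z + (1 - t) * g\<^sub>\<alpha> z) ` \<E>)
       \<and> connected (harm (\<lambda>z. t * h\<^sub>\<theta> z + (1 - t) * h\<^sub>\<alpha> z)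
                     (\<lambda>z. t * g\<^sub>\<theta> z + (1 - t) * g\<^sub>\<alpha> z) ` \<E>)
       \<and> convex_imag_dir (harm (\<lambda>z. t * h\<^sub>\<theta> z + (1 - t) * h\<^sub>\<alpha> z)
                     (\<lambda>z. t * g\<^sub>\<theta> z + (1 - t) * g\<^sub>\<alpha> z) ` \<E>)"
proof -
  define h where "h = (\<lambda>z. t * h\<^sub>\<theta> z + (1 - t) * h\<^sub>\<alpha> z)"
  define g where "g = (\<lambda>z. t * g\<^sub>\<theta> z + (1 - t) * g\<^sub>\<alpha> z)"
  note basic = S_H_combination_basic[OF assms(3,7), of t, folded h_def g_def]
  have lu: "loc_univ_sense_pres h g" using assms(11) by (simp add: h_def g_def)
  have sum: "h z + g z = F_conv t \<theta> \<alpha> z" if "z \<in> \<E>" for z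
  proof -
    have "h z + g z = t * (h\<^sub>\<theta> z + g\<^sub>\<theta> z) + (1 - t) * (h\<^sub>\<alpha> z + g\<^sub>\<alpha> z)"
      by (simp add: h_def g_def algebra_simps)
    thus ?thesis using assms(4,8) that by (simp add: F_conv_def F_theta_def F_alpha_def)
  qed
  have inj: "inj_on (\<lambda>z. h z + g z) \<E>"
    using F_conv_inj[OF assms(1,2,9,10,5,6)] by (rule inj_on_cong[THEN iffD2, rotated]) (rule sum)
  have "(\<lambda>z. h z + g z) ` \<E> = F_conv t \<theta> \<alpha> ` \<E>" by (intro image_cong refl sum)
  hence cid: "convex_imag_dir ((\<lambda>z. h z + g z) ` \<E>)"
    using F_conv_convex_imag_dir[OF assms(1,2,9,10,5,6)] by simp
  have shear: "inj_on (harm h g) \<E> \<and> open (harm h g ` \<E>) \<and> convex_imag_dir (harm h g ` \<E>)"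
    by (rule shear_construction[OF basic(1,2) lu inj cid])
  have "continuous_on \<E> (harm h g)"
    unfolding harm_def using basic(1,2) by (intro continuous_intros holomorphic_on_imp_continuous_on)
  hence "connected (harm h g ` \<E>)"
    by (rule connected_continuous_image) (simp add: unit_disk_def)
  moreover have "S_H h g" using basic lu shear by (simp add: S_H_def)
  ultimately show ?thesis using shear unfolding h_def g_def by blast
qed

end
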